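(* Let $(V,\eta)$ be as in the context. For any three states $s,s_1,s_2\in\mathcal S$ there exists a unique $\vec\beta\in T_s\mathcal S$ with $\eta(\vec\beta,\vec\beta)<1$ such that $B(s,\vec\beta)s_1=s_2$. It is the following rational function of $(s,s_1,s_2)$: $$\vec\beta(s,s_1,s_2)=\frac{\gamma_1+\gamma_2}{\gamma_1^2+\gamma_2^2+\gamma_{12}-1}\bigl(s_2-s_1-(\gamma_2-\gamma_1)s\bigr),$$ where $\gamma_1=-\eta(s,s_1)$, $\gamma_2=-\eta(s,s_2)$, $\gamma_{12}=-\eta(s_1,s_2)$. The corresponding boost $B(s,s_1,s_2):=B(s,\vec\beta(s,s_1,s_2))$ is likewise rational in $(s,s_1,s_2)$, namely, with $s_{21}:=s_2-s_1$, $$B(s,s_1,s_2)=\mathrm{id}_V+\frac{2(1-\gamma_{12})\,s\otimes s+s_{21}\otimes s_{21}+2\gamma_1\,s\otimes s_{21}-2\gamma_2\,s_{21}\otimes s}{1+2\gamma_1\gamma_2-\gamma_{12}}.$$ Moreover $\vec\beta$ is Lorentz equivariant: for every linear map $L:V\to V$ preserving $\eta$ and mapping $\mathcal S$ onto itself, $\vec\beta(Ls,Ls_1,Ls_2)=L\,\vec\beta(s,s_1,s_2)$.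
   Context: $V$ is a 4-dimensional real vector space with a symmetric non-degenerate bilinear form $\eta$ of signature $(-,+,+,+)$. The set of states of motion $\mathcal S$ is one fixed connected component of $\{v\in V:\eta(v,v)=-1\}$ (the future unit timelike vectors). For $s\in\mathcal S$, $T_s\mathcal S:=\{u\in V:\eta(u,s)=0\}$, on which $\eta$ is positive definite. Endomorphisms are written via $(u\otimes v)(w):=\eta(v,w)\,u$, and $u\wedge v:=u\otimes v-v\otimes u$. For $s\in\mathcal S$ and $\vec\beta\in T_s\mathcal S$ with $\beta^2:=\eta(\vec\beta,\vec\beta)<1$, $\beta>0$, put $\vec n=\vec\beta/\beta$, $\gamma=(1-\beta^2)^{-1/2}$; the boost relative to $s$ with velocity $\vec\beta$ is $$B(s,\vec\beta)=\mathrm{id}_V+(\gamma-1)(-s\otimes s+\vec n\otimes\vec n)+\beta\gamma(s\otimes\vec n-\vec n\otimes s),$$ and $B(s,0)=\mathrm{id}_V$. *)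

theory Defs
  imports "HOL-Analysis.Analysis"
begin

text \<open>A symmetric bilinear form of signature (-,+,+,+) on a 4-dimensional real vector space:
  symmetric, bilinear, and admitting a basis e0,...,e3 with eta(e_i,e_j) = diag(-1,1,1,1)
  (this encodes non-degeneracy and the signature).\<close>
definition minkowski_form :: "('v::euclidean_space \<Rightarrow> 'v \<Rightarrow> real) \<Rightarrow> bool" where
  "minkowski_form eta \<longleftrightarrow> DIM('v) = 4 \<and> bilinear eta \<and> (\<forall>x y. eta x y = eta y x) \<and>
     (\<exists>e::nat \<Rightarrow> 'v. span (e ` {..<4}) = UNIV \<and>
        eta (e 0) (e 0) = -1 \<and> (\<forall>i\<in>{1..3}. eta (e i) (e i) = 1) \<and>
        (\<forall>i<4. \<forall>j<4. i \<noteq> j \<longrightarrow> eta (e i) (e j) = 0))"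

definition tens :: "('v::real_vector \<Rightarrow> 'v \<Rightarrow> real) \<Rightarrow> 'v \<Rightarrow> 'v \<Rightarrow> 'v \<Rightarrow> 'v" where
  "tens eta u v = (\<lambda>w. eta v w *\<^sub>R u)"

definition boost :: "('v::real_vector \<Rightarrow> 'v \<Rightarrow> real) \<Rightarrow> 'v \<Rightarrow> 'v \<Rightarrow> 'v \<Rightarrow> 'v" where
  "boost eta s \<beta> = (if \<beta> = 0 then id else
     (let b = sqrt (eta \<beta> \<beta>); n = (1 / b) *\<^sub>R \<beta>; g = 1 / sqrt (1 - b\<^sup>2) in
      (\<lambda>w. w + (g - 1) *\<^sub>R (- tens eta s s w + tens eta n n w)
             + (b * g) *\<^sub>R (tens eta s n w - tens eta n s w))))"

definition beta_vel :: "('v::real_vector \<Rightarrow> 'v \<Rightarrow> real) \<Rightarrow> 'v \<Rightarrow> 'v \<Rightarrow> 'v \<Rightarrow> 'v" where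
  "beta_vel eta s s1 s2 =
     (let g1 = - eta s s1; g2 = - eta s s2; g12 = - eta s1 s2 in
      ((g1 + g2) / (g1\<^sup>2 + g2\<^sup>2 + g12 - 1)) *\<^sub>R (s2 - s1 - (g2 - g1) *\<^sub>R s))"

end

theory Submission
  imports Defs
begin

(* In orthonormal coordinates, a vector eta-orthogonal to a unit timelike vector is spacelike
  (Cauchy-Schwarz in the spatial part), so eta is positive definite on T_s S.  By the reverse
  Cauchy-Schwarz inequality and connectedness, -eta(s,s') >= 1 for states on one sheet.

  Let d be the component of s2 - s1 orthogonal to s and P = g1 + g2,
  N = g1^2 + g2^2 + g12 - 1, M = 1 + 2 g1 g2 - g12.  Then eta(d,d) = 2 g12 - 2 + (g2 - g1)^2,
  2N = P^2 + eta(d,d) and 2M = P^2 - eta(d,d), hence N^2 - P^2 eta(d,d) = M^2: the velocity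
  beta = (P/N) d has Lorentz factor N/M, and writing the boost as a rational function of its
  Lorentz factor gives the stated formula.  Conversely, pairing B(s,beta) s1 = s2 with s
  shows that any admissible beta is a multiple of d, and the relation between eta(d,d) and
  the Lorentz factor fixes the multiple. *)

lemma timelike_orthogonal_spacelike:
  fixes a x :: "'a::real_inner" and a0 x0 :: real
  assumes a: "a0\<^sup>2 = 1 + (norm a)\<^sup>2" and ortho: "x0 * a0 = inner x a" and nonzero: "(x0, x) \<noteq> 0"
  shows "x0\<^sup>2 < (norm x)\<^sup>2"
proof -
  have "(norm a)\<^sup>2 < \<bar>a0\<bar>\<^sup>2" using a by simp
  then have a_less: "norm a < \<bar>a0\<bar>" by (rule power2_less_imp_less) simp
  have "x \<noteq> 0"
  proof
    assume "x = 0"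
    moreover have "a0 \<noteq> 0" using a_less by auto
    ultimately have "x0 = 0" using ortho by simp
    with \<open>x = 0\<close> nonzero show False by (simp add: zero_prod_def)
  qed
  have "\<bar>x0\<bar> * \<bar>a0\<bar> \<le> norm x * norm a"
    using Cauchy_Schwarz_ineq2[of x a] ortho by (simp add: abs_mult)
  also have "\<dots> < norm x * \<bar>a0\<bar>" using \<open>x \<noteq> 0\<close> a_less by simp
  finally have "\<bar>x0\<bar> < norm x" by (rule mult_right_less_imp_less) simp
  then show ?thesis by (metis abs_le_square_iff abs_norm_cancel not_le)
qed

lemma minkowski_form_basis:
  fixes eta :: "'v::euclidean_space \<Rightarrow> 'v \<Rightarrow> real"
  assumes "minkowski_form eta"
  obtains e :: "nat \<Rightarrow> 'v" where
    "\<And>v. \<exists>c :: nat \<Rightarrow> real. v = c 0 *\<^sub>R e 0 + c 1 *\<^sub>R e 1 + c 2 *\<^sub>R e 2 + c 3 *\<^sub>R e 3"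
    "eta (e 0) (e 0) = -1" "eta (e 1) (e 1) = 1" "eta (e 2) (e 2) = 1" "eta (e 3) (e 3) = 1"
    "\<And>i j. i < 4 \<Longrightarrow> j < 4 \<Longrightarrow> i \<noteq> j \<Longrightarrow> eta (e i) (e j) = 0"
proof -
  from assms obtain e :: "nat \<Rightarrow> 'v" where span: "span (e ` {..<4}) = UNIV"
    and e0: "eta (e 0) (e 0) = -1" and e123: "\<forall>i\<in>{1..3}. eta (e i) (e i) = 1"
    and orth: "\<forall>i<4. \<forall>j<4. i \<noteq> j \<longrightarrow> eta (e i) (e j) = 0"
    unfolding minkowski_form_def by (elim conjE exE) blast
  have "eta (e i) (e i) \<noteq> 0" if "i < 4" for i
    using that e0 e123 by (cases "i = 0") auto
  then have "inj_on e {..<4}"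
    using orth by (metis inj_onI lessThan_iff)
  have "\<exists>c :: nat \<Rightarrow> real. v = c 0 *\<^sub>R e 0 + c 1 *\<^sub>R e 1 + c 2 *\<^sub>R e 2 + c 3 *\<^sub>R e 3" for v
  proof -
    have "v \<in> span (e ` {..<4})" using span by simp
    then obtain u where "v = (\<Sum>x\<in>e ` {..<4}. u x *\<^sub>R x)"
      using span_finite[of "e ` {..<4}"] by auto
    also have "\<dots> = (\<Sum>i<4. u (e i) *\<^sub>R e i)"
      using sum.reindex[OF \<open>inj_on e {..<4}\<close>] by simp
    also have "\<dots> = u (e 0) *\<^sub>R e 0 + u (e 1) *\<^sub>R e 1 + u (e 2) *\<^sub>R e 2 + u (e 3) *\<^sub>R e 3"
      by (simp add: eval_nat_numeral)
    finally have "v = u (e 0) *\<^sub>R e 0 + u (e 1) *\<^sub>R e 1 + u (e 2) *\<^sub>R e 2 + u (e 3) *\<^sub>R e 3" .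
    then show ?thesis by (intro exI[where x = "\<lambda>i. u (e i)"])
  qed
  moreover have "eta (e 1) (e 1) = 1" "eta (e 2) (e 2) = 1" "eta (e 3) (e 3) = 1"
    using e123 by auto
  ultimately show ?thesis using that e0 orth by blast
qed

lemma eta_orthonormal_expansion:
  fixes eta :: "'v::real_vector \<Rightarrow> 'v \<Rightarrow> real" and e :: "nat \<Rightarrow> 'v"
  assumes bil: "bilinear eta"
    and e: "eta (e 0) (e 0) = -1" "eta (e 1) (e 1) = 1" "eta (e 2) (e 2) = 1" "eta (e 3) (e 3) = 1"
    and orth: "\<And>i j. i < 4 \<Longrightarrow> j < 4 \<Longrightarrow> i \<noteq> j \<Longrightarrow> eta (e i) (e j) = 0"
  shows "eta (a0 *\<^sub>R e 0 + a1 *\<^sub>R e 1 + a2 *\<^sub>R e 2 + a3 *\<^sub>R e 3)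
             (b0 *\<^sub>R e 0 + b1 *\<^sub>R e 1 + b2 *\<^sub>R e 2 + b3 *\<^sub>R e 3)
         = - a0 * b0 + a1 * b1 + a2 * b2 + a3 * b3"
proof -
  have "eta (e i) (e j) = 0" if "i \<noteq> j" "i \<in> {0, 1, 2, 3}" "j \<in> {0, 1, 2, 3}" for i j :: nat
    using orth that by auto
  then show ?thesis
    by (simp add: bilinear_ladd[OF bil] bilinear_radd[OF bil] bilinear_lmul[OF bil]
        bilinear_rmul[OF bil] e e(2)[unfolded One_nat_def])
qed

lemma minkowski_form_coordinates:
  fixes eta :: "'v::euclidean_space \<Rightarrow> 'v \<Rightarrow> real"
  assumes "minkowski_form eta"
  obtains t :: "'v \<Rightarrow> real" and x :: "'v \<Rightarrow> real \<times> real \<times> real"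
  where "\<And>v w. eta v w = - t v * t w + inner (x v) (x w)"
    and "\<And>v. v \<noteq> 0 \<Longrightarrow> (t v, x v) \<noteq> 0"
proof -
  have bil: "bilinear eta" using assms unfolding minkowski_form_def by blast
  obtain e :: "nat \<Rightarrow> 'v" where
    span: "\<And>v. \<exists>c :: nat \<Rightarrow> real. v = c 0 *\<^sub>R e 0 + c 1 *\<^sub>R e 1 + c 2 *\<^sub>R e 2 + c 3 *\<^sub>R e 3"
    and on: "eta (e 0) (e 0) = -1" "eta (e 1) (e 1) = 1" "eta (e 2) (e 2) = 1" "eta (e 3) (e 3) = 1"
      "\<And>i j. i < 4 \<Longrightarrow> j < 4 \<Longrightarrow> i \<noteq> j \<Longrightarrow> eta (e i) (e j) = 0"
    using minkowski_form_basis[OF assms] by blast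
  note expand = eta_orthonormal_expansion[OF bil on]
  obtain c :: "'v \<Rightarrow> nat \<Rightarrow> real" where
    c: "\<And>v. v = c v 0 *\<^sub>R e 0 + c v 1 *\<^sub>R e 1 + c v 2 *\<^sub>R e 2 + c v 3 *\<^sub>R e 3"
    using span by metis
  show ?thesis
  proof
    show "eta v w = - c v 0 * c w 0 + inner (c v 1, c v 2, c v 3) (c w 1, c w 2, c w 3)" for v w
    proof -
      have "eta v w = eta (c v 0 *\<^sub>R e 0 + c v 1 *\<^sub>R e 1 + c v 2 *\<^sub>R e 2 + c v 3 *\<^sub>R e 3)
          (c w 0 *\<^sub>R e 0 + c w 1 *\<^sub>R e 1 + c w 2 *\<^sub>R e 2 + c w 3 *\<^sub>R e 3)"
        by (simp only: c[symmetric])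
      also have "\<dots> = - c v 0 * c w 0 + c v 1 * c w 1 + c v 2 * c w 2 + c v 3 * c w 3"
        by (rule expand)
      finally show ?thesis by simp
    qed
    show "(c v 0, c v 1, c v 2, c v 3) \<noteq> 0" if "v \<noteq> 0" for v
      using c[of v] that by (auto simp: zero_prod_def)
  qed
qed

locale minkowski =
  fixes eta :: "'v::euclidean_space \<Rightarrow> 'v \<Rightarrow> real"
  assumes eta_bilinear: "bilinear eta"
    and eta_sym: "eta x y = eta y x"
    and eta_pos_orthogonal: "eta s s = -1 \<Longrightarrow> eta u s = 0 \<Longrightarrow> u \<noteq> 0 \<Longrightarrow> 0 < eta u u"

lemma minkowski_form_imp_minkowski:
  fixes eta :: "'v::euclidean_space \<Rightarrow> 'v \<Rightarrow> real"
  assumes "minkowski_form eta"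
  shows "minkowski eta"
proof
  show "bilinear eta" and "eta x y = eta y x" for x y
    using assms unfolding minkowski_form_def by auto
  obtain t and x :: "'v \<Rightarrow> real \<times> real \<times> real"
    where eta: "\<And>v w. eta v w = - t v * t w + inner (x v) (x w)"
    and coords_nonzero: "\<And>v. v \<noteq> 0 \<Longrightarrow> (t v, x v) \<noteq> 0"
    using minkowski_form_coordinates[OF assms] by blast
  fix s u assume "eta s s = -1" "eta u s = 0" "u \<noteq> 0"
  then have "(t s)\<^sup>2 = 1 + (norm (x s))\<^sup>2" and "t u * t s = inner (x u) (x s)"
    unfolding eta power2_norm_eq_inner by (simp_all add: power2_eq_square)
  then have "(t u)\<^sup>2 < (norm (x u))\<^sup>2"
    by (rule timelike_orthogonal_spacelike[OF _ _ coords_nonzero[OF \<open>u \<noteq> 0\<close>]])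
  then show "0 < eta u u" unfolding eta power2_norm_eq_inner by (simp add: power2_eq_square)
qed

context minkowski
begin

lemmas eta_simps = bilinear_ladd[OF eta_bilinear] bilinear_radd[OF eta_bilinear]
  bilinear_lmul[OF eta_bilinear] bilinear_rmul[OF eta_bilinear]
  bilinear_lsub[OF eta_bilinear] bilinear_rsub[OF eta_bilinear]
  bilinear_lneg[OF eta_bilinear] bilinear_rneg[OF eta_bilinear]
  bilinear_lzero[OF eta_bilinear] bilinear_rzero[OF eta_bilinear]

lemma eta_nonneg_orthogonal:
  assumes "eta s s = -1" and "eta u s = 0"
  shows "0 \<le> eta u u"
  using eta_pos_orthogonal[OF assms] by (cases "u = 0") (auto simp: eta_simps)

lemma reverse_cauchy_schwarz:
  assumes s: "eta s s = -1" and x: "eta x x = -1"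
  shows "1 \<le> (eta s x)\<^sup>2"
proof -
  let ?u = "x + eta s x *\<^sub>R s"
  have "eta ?u s = 0" using s by (simp add: eta_simps eta_sym[of x s])
  then have "0 \<le> eta ?u ?u" by (rule eta_nonneg_orthogonal[OF s])
  also have "eta ?u ?u = (eta s x)\<^sup>2 - 1"
    using s x by (simp add: eta_simps eta_sym[of x s] power2_eq_square algebra_simps)
  finally show ?thesis by simp
qed

lemma cauchy_schwarz_orthogonal:
  assumes s: "eta s s = -1" and u: "eta u s = 0" and v: "eta v s = 0"
  shows "(eta u v)\<^sup>2 \<le> eta u u * eta v v"
proof (cases "v = 0")
  case True
  then show ?thesis by (simp add: eta_simps)
next
  case False
  then have v_pos: "0 < eta v v" by (rule eta_pos_orthogonal[OF s v])
  define t where "t = eta u v / eta v v"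
  have "eta (u - t *\<^sub>R v) s = 0" using u v by (simp add: eta_simps)
  then have "0 \<le> eta (u - t *\<^sub>R v) (u - t *\<^sub>R v)" by (rule eta_nonneg_orthogonal[OF s])
  also have "\<dots> = eta u u - (eta u v)\<^sup>2 / eta v v"
    using v_pos unfolding t_def
    by (simp add: eta_simps eta_sym[of v u] power2_eq_square field_simps)
  finally show ?thesis using v_pos by (simp add: field_simps)
qed

text \<open>By reverse Cauchy--Schwarz \<open>eta s\<close> omits the interval \<open>(-1, 1)\<close> on \<open>S\<close>, so by
  connectedness it cannot take both the value \<open>eta s s = -1\<close> and a value \<open>\<ge> 1\<close>.\<close>
lemma connected_hyperboloid_eta_le:
  assumes conn: "connected S" and hyp: "S \<subseteq> {v. eta v v = -1}" and "s \<in> S" "x \<in> S"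
  shows "eta s x \<le> -1"
proof (rule ccontr)
  assume "\<not> eta s x \<le> -1"
  have s: "eta s s = -1" using hyp \<open>s \<in> S\<close> by auto
  have sq: "1 \<le> (eta s v)\<^sup>2" if "v \<in> S" for v
    using reverse_cauchy_schwarz[OF s] hyp that by auto
  have "1 \<le> eta s x"
    using sq[OF \<open>x \<in> S\<close>] \<open>\<not> eta s x \<le> -1\<close> abs_le_square_iff[of 1 "eta s x"] by auto
  have "connected (eta s ` S)"
    by (intro connected_continuous_image conn
        bilinear_continuous_on_compose[OF continuous_on_const continuous_on_id eta_bilinear])
  moreover have "eta s s \<in> eta s ` S" "eta s x \<in> eta s ` S"
    using \<open>s \<in> S\<close> \<open>x \<in> S\<close> by auto
  ultimately have "0 \<in> eta s ` S"
    using connectedD_interval s \<open>1 \<le> eta s x\<close> by fastforce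
  then show False using sq by fastforce
qed

end

definition lorentz_factor :: "('v::real_vector \<Rightarrow> 'v \<Rightarrow> real) \<Rightarrow> 'v \<Rightarrow> real" where
  "lorentz_factor eta \<beta> = 1 / sqrt (1 - eta \<beta> \<beta>)"

lemma lorentz_factor_sq:
  assumes "eta \<beta> \<beta> < 1"
  shows "(lorentz_factor eta \<beta>)\<^sup>2 * (1 - eta \<beta> \<beta>) = 1"
  using assms by (simp add: lorentz_factor_def power_divide)

context minkowski
begin

text \<open>Since \<open>(g - 1) / eta \<beta> \<beta> = g\<^sup>2 / (g + 1)\<close>, the boost is a rational function of its
  Lorentz factor \<open>g\<close>; in this form the case \<open>\<beta> = 0\<close> needs no separate treatment.\<close>
lemma boost_eq:
  assumes s: "eta s s = -1" and \<beta>: "eta \<beta> s = 0" and lt1: "eta \<beta> \<beta> < 1"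
  defines "g \<equiv> lorentz_factor eta \<beta>"
  shows "boost eta s \<beta> w = w + ((1 - g) * eta s w) *\<^sub>R s + (g\<^sup>2 / (g + 1) * eta \<beta> w) *\<^sub>R \<beta>
           + g *\<^sub>R (eta \<beta> w *\<^sub>R s - eta s w *\<^sub>R \<beta>)"
proof (cases "\<beta> = 0")
  case True
  then show ?thesis by (simp add: boost_def g_def lorentz_factor_def eta_simps)
next
  case False
  define B where "B = eta \<beta> \<beta>"
  define b where "b = sqrt B"
  have B_pos: "0 < B" unfolding B_def by (rule eta_pos_orthogonal[OF s \<beta> False])
  then have b: "0 < b" "b\<^sup>2 = B" unfolding b_def by simp_all
  have g: "g\<^sup>2 * (1 - B) = 1" "0 < g"
    using lorentz_factor_sq[of eta \<beta>, OF lt1] lt1 unfolding g_def B_def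
    by (simp_all add: lorentz_factor_def)
  have coeff: "(g - 1) / B = g\<^sup>2 / (g + 1)"
    using g B_pos by (simp add: field_simps power2_eq_square)
  have "boost eta s \<beta> w = w + (g - 1) *\<^sub>R (- (eta s w *\<^sub>R s)
        + eta ((1 / b) *\<^sub>R \<beta>) w *\<^sub>R ((1 / b) *\<^sub>R \<beta>))
        + (b * g) *\<^sub>R (eta ((1 / b) *\<^sub>R \<beta>) w *\<^sub>R s - eta s w *\<^sub>R ((1 / b) *\<^sub>R \<beta>))"
    using False b unfolding boost_def tens_def Let_def g_def lorentz_factor_def B_def b_def
    by simp
  also have "\<dots> = w + ((1 - g) * eta s w) *\<^sub>R s + ((g - 1) / B * eta \<beta> w) *\<^sub>R \<beta>
           + g *\<^sub>R (eta \<beta> w *\<^sub>R s - eta s w *\<^sub>R \<beta>)"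
    using b
    by (simp add: eta_simps scaleR_diff_right scaleR_add_right algebra_simps power2_eq_square)
  finally show ?thesis unfolding coeff .
qed

end

lemma beta_vel_linear_isometry:
  fixes eta :: "'v::real_vector \<Rightarrow> 'v \<Rightarrow> real"
  assumes L: "linear L" and isometry: "\<And>x y. eta (L x) (L y) = eta x y"
  shows "beta_vel eta (L s) (L s1) (L s2) = L (beta_vel eta s s1 s2)"
  unfolding beta_vel_def Let_def isometry by (simp add: linear_diff[OF L] linear_cmul[OF L])

text \<open>Identities between linear combinations of two vectors are checked coefficientwise: both
  sides are rewritten as images of the linear map \<open>lincomb2 x y\<close> on \<open>real \<times> real\<close>.\<close>
definition lincomb2 :: "'a::real_vector \<Rightarrow> 'a \<Rightarrow> real \<times> real \<Rightarrow> 'a" where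
  "lincomb2 x y c = fst c *\<^sub>R x + snd c *\<^sub>R y"

lemma lincomb2_fold:
  assumes "F = lincomb2 x y"
  shows "F c + F c' = F (c + c')" "F c - F c' = F (c - c')" "- F c = F (- c)"
    "r *\<^sub>R F c = F (r *\<^sub>R c)" "x = F (1, 0)" "y = F (0, 1)"
  using assms by (simp_all add: lincomb2_def algebra_simps)

locale state_triple = minkowski +
  fixes s s1 s2 :: "'v::euclidean_space"
  assumes unit_s: "eta s s = -1" and unit_s1: "eta s1 s1 = -1" and unit_s2: "eta s2 s2 = -1"
    and future_s1: "eta s s1 \<le> -1" and future_s2: "eta s s2 \<le> -1"
begin

definition gamma1 :: real where "gamma1 = - eta s s1"
definition gamma2 :: real where "gamma2 = - eta s s2"
definition gamma12 :: real where "gamma12 = - eta s1 s2"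

definition boost_denominator :: real where
  "boost_denominator = 1 + 2 * gamma1 * gamma2 - gamma12"
definition beta_denominator :: real where
  "beta_denominator = gamma1\<^sup>2 + gamma2\<^sup>2 + gamma12 - 1"

definition s21_perp :: 'v where "s21_perp = s2 - s1 - (gamma2 - gamma1) *\<^sub>R s"

lemma eta_states:
  "eta s s1 = - gamma1" "eta s1 s = - gamma1" "eta s s2 = - gamma2" "eta s2 s = - gamma2"
  "eta s1 s2 = - gamma12" "eta s2 s1 = - gamma12"
  unfolding gamma1_def gamma2_def gamma12_def by (simp_all add: eta_sym[of _ s] eta_sym[of s2 s1])

lemma gamma_ge_1: "1 \<le> gamma1" "1 \<le> gamma2"
  using future_s1 future_s2 unfolding gamma1_def gamma2_def by simp_all

lemma eta_s21_perp_s: "eta s21_perp s = 0"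
  unfolding s21_perp_def by (simp add: eta_simps eta_states unit_s)

lemma eta_s21_perp_sq: "eta s21_perp s21_perp = 2 * gamma12 - 2 + (gamma2 - gamma1)\<^sup>2"
  unfolding s21_perp_def
  by (simp add: eta_simps eta_states unit_s unit_s1 unit_s2 power2_eq_square algebra_simps)

lemma boost_denominator_pos: "0 < boost_denominator"
proof -
  define u1 where "u1 = s1 - gamma1 *\<^sub>R s"
  define u2 where "u2 = s2 - gamma2 *\<^sub>R s"
  have "eta u1 s = 0" "eta u2 s = 0"
    unfolding u1_def u2_def by (simp_all add: eta_simps eta_states unit_s)
  then have "(eta u1 u2)\<^sup>2 \<le> eta u1 u1 * eta u2 u2"
    by (rule cauchy_schwarz_orthogonal[OF unit_s])
  moreover have "eta u1 u2 = gamma1 * gamma2 - gamma12" "eta u1 u1 = gamma1\<^sup>2 - 1"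
    "eta u2 u2 = gamma2\<^sup>2 - 1"
    unfolding u1_def u2_def
    by (simp_all add: eta_simps eta_states unit_s unit_s1 unit_s2 power2_eq_square algebra_simps)
  ultimately have "(gamma1 * gamma2 - gamma12)\<^sup>2 \<le> (gamma1\<^sup>2 - 1) * (gamma2\<^sup>2 - 1)"
    by simp
  also have "\<dots> < (gamma1 * gamma2 + 1)\<^sup>2"
  proof -
    have "(gamma1 * gamma2 + 1)\<^sup>2 - (gamma1\<^sup>2 - 1) * (gamma2\<^sup>2 - 1) = (gamma1 + gamma2)\<^sup>2"
      by (simp add: power2_eq_square algebra_simps)
    moreover have "0 < (gamma1 + gamma2)\<^sup>2" using gamma_ge_1 by simp
    ultimately show ?thesis by linarith
  qed
  finally have "\<bar>gamma1 * gamma2 - gamma12\<bar> < \<bar>gamma1 * gamma2 + 1\<bar>"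
    by (metis abs_le_square_iff not_le)
  moreover have "0 \<le> gamma1 * gamma2" using gamma_ge_1 by simp
  ultimately show ?thesis unfolding boost_denominator_def by linarith
qed

lemma beta_vel_eq:
  "beta_vel eta s s1 s2 = ((gamma1 + gamma2) / beta_denominator) *\<^sub>R s21_perp"
  unfolding beta_vel_def Let_def s21_perp_def beta_denominator_def gamma1_def gamma2_def
    gamma12_def ..

lemma denominators_eq:
  "2 * beta_denominator = (gamma1 + gamma2)\<^sup>2 + eta s21_perp s21_perp"
  "2 * boost_denominator = (gamma1 + gamma2)\<^sup>2 - eta s21_perp s21_perp"
  unfolding eta_s21_perp_sq beta_denominator_def boost_denominator_def
  by (simp_all add: power2_eq_square algebra_simps)

lemma beta_denominator_pos: "0 < beta_denominator"
proof -
  have "4 \<le> (gamma1 + gamma2)\<^sup>2"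
    using gamma_ge_1 power_mono[of 2 "gamma1 + gamma2" 2] by simp
  moreover have "0 \<le> eta s21_perp s21_perp"
    by (rule eta_nonneg_orthogonal[OF unit_s eta_s21_perp_s])
  ultimately show ?thesis using denominators_eq(1) by linarith
qed

lemma eta_beta_vel_s: "eta (beta_vel eta s s1 s2) s = 0"
  by (simp add: beta_vel_eq eta_simps eta_s21_perp_s)

lemma one_minus_eta_beta_vel:
  "1 - eta (beta_vel eta s s1 s2) (beta_vel eta s s1 s2)
     = (boost_denominator / beta_denominator)\<^sup>2"
proof -
  define P where "P = gamma1 + gamma2"
  define D where "D = eta s21_perp s21_perp"
  have "eta (beta_vel eta s s1 s2) (beta_vel eta s s1 s2) = (P / beta_denominator)\<^sup>2 * D"
    by (simp add: beta_vel_eq eta_simps P_def D_def power2_eq_square)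
  then have "1 - eta (beta_vel eta s s1 s2) (beta_vel eta s s1 s2)
      = (beta_denominator\<^sup>2 - P\<^sup>2 * D) / beta_denominator\<^sup>2"
    using beta_denominator_pos by (simp add: power_divide field_simps)
  also have "beta_denominator\<^sup>2 - P\<^sup>2 * D = boost_denominator\<^sup>2"
    using denominators_eq unfolding P_def D_def by algebra
  finally show ?thesis by (simp add: power_divide)
qed

lemma eta_beta_vel_less_1: "eta (beta_vel eta s s1 s2) (beta_vel eta s s1 s2) < 1"
proof -
  have "0 < (boost_denominator / beta_denominator)\<^sup>2"
    using boost_denominator_pos beta_denominator_pos by simp
  then show ?thesis using one_minus_eta_beta_vel by linarith
qed

lemma lorentz_factor_beta_vel:
  "lorentz_factor eta (beta_vel eta s s1 s2) = beta_denominator / boost_denominator"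
  using boost_denominator_pos beta_denominator_pos
  by (simp add: lorentz_factor_def one_minus_eta_beta_vel)

lemma boost_beta_vel_perp:
  "boost eta s (beta_vel eta s s1 s2) w = w + (1 / boost_denominator) *\<^sub>R
     ((- (eta s21_perp s21_perp * eta s w)) *\<^sub>R s + eta s21_perp w *\<^sub>R s21_perp
      + (gamma1 + gamma2) *\<^sub>R (eta s21_perp w *\<^sub>R s - eta s w *\<^sub>R s21_perp))"
proof -
  define M where "M = boost_denominator"
  define N where "N = beta_denominator"
  define P where "P = gamma1 + gamma2"
  define D where "D = eta s21_perp s21_perp"
  define g where "g = N / M"
  define k where "k = P / N"
  define a where "a = eta s w"
  define e where "e = eta s21_perp w"
  have rel: "N - M = D" "N + M = P\<^sup>2"
    using denominators_eq unfolding M_def N_def P_def D_def by simp_all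
  have pos: "0 < M" "0 < N" "0 < P"
    unfolding M_def N_def P_def using boost_denominator_pos beta_denominator_pos gamma_ge_1
    by simp_all
  have \<beta>: "beta_vel eta s s1 s2 = k *\<^sub>R s21_perp"
    unfolding beta_vel_eq k_def P_def N_def ..
  have "boost eta s (beta_vel eta s s1 s2) w = w + ((1 - g) * a) *\<^sub>R s
      + (g\<^sup>2 / (g + 1) * (k * e)) *\<^sub>R (k *\<^sub>R s21_perp)
      + g *\<^sub>R ((k * e) *\<^sub>R s - a *\<^sub>R (k *\<^sub>R s21_perp))"
    using boost_eq[OF unit_s eta_beta_vel_s eta_beta_vel_less_1, of w,
        unfolded lorentz_factor_beta_vel, unfolded \<beta>]
    by (simp only: \<beta> bilinear_lmul[OF eta_bilinear] real_scaleR_def M_def[symmetric]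
        N_def[symmetric] g_def[symmetric] a_def[symmetric] e_def[symmetric])
  also have "\<dots> = w + (1 / M) *\<^sub>R
      ((- (D * a)) *\<^sub>R s + e *\<^sub>R s21_perp + P *\<^sub>R (e *\<^sub>R s - a *\<^sub>R s21_perp))"
  proof -
    have "((1 - g) * a) *\<^sub>R x + (g\<^sup>2 / (g + 1) * (k * e)) *\<^sub>R (k *\<^sub>R y)
        + g *\<^sub>R ((k * e) *\<^sub>R x - a *\<^sub>R (k *\<^sub>R y))
        = (1 / M) *\<^sub>R ((- (D * a)) *\<^sub>R x + e *\<^sub>R y + P *\<^sub>R (e *\<^sub>R x - a *\<^sub>R y))" for x y :: 'v
    proof -
      define F where "F = lincomb2 x y"
      note F = lincomb2_fold[OF F_def]
      show ?thesis
        unfolding F by (rule arg_cong[where f = F]) (use pos rel(2) in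
          \<open>simp add: g_def k_def rel(1)[symmetric] field_simps power2_eq_square add_pos_pos\<close>)
    qed
    then show ?thesis by (simp add: add.assoc)
  qed
  finally show ?thesis unfolding M_def D_def P_def a_def e_def .
qed

lemma boost_beta_vel:
  "boost eta s (beta_vel eta s s1 s2) =
     (\<lambda>w. w + (1 / boost_denominator) *\<^sub>R
        ((2 * (1 - gamma12)) *\<^sub>R tens eta s s w + tens eta (s2 - s1) (s2 - s1) w
         + (2 * gamma1) *\<^sub>R tens eta s (s2 - s1) w - (2 * gamma2) *\<^sub>R tens eta (s2 - s1) s w))"
  (is "?boost = ?formula")
proof
  fix w
  define u where "u = s2 - s1"
  define \<delta> where "\<delta> = gamma2 - gamma1"
  define a where "a = eta s w"
  define e where "e = eta u w"
  have perp: "s21_perp = u - \<delta> *\<^sub>R s" unfolding s21_perp_def u_def \<delta>_def ..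
  have "(- (eta s21_perp s21_perp * a)) *\<^sub>R x + (e - \<delta> * a) *\<^sub>R (y - \<delta> *\<^sub>R x)
      + (gamma1 + gamma2) *\<^sub>R ((e - \<delta> * a) *\<^sub>R x - a *\<^sub>R (y - \<delta> *\<^sub>R x))
      = (2 * (1 - gamma12)) *\<^sub>R (a *\<^sub>R x) + e *\<^sub>R y + (2 * gamma1) *\<^sub>R (e *\<^sub>R x)
        - (2 * gamma2) *\<^sub>R (a *\<^sub>R y)" for x y :: 'v
  proof -
    define F where "F = lincomb2 x y"
    note F = lincomb2_fold[OF F_def]
    show ?thesis
      unfolding F by (rule arg_cong[where f = F])
        (simp add: eta_s21_perp_sq \<delta>_def power2_eq_square algebra_simps)
  qed
  from this[of s u] show "?boost w = ?formula w"
    unfolding boost_beta_vel_perp tens_def u_def[symmetric]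
    by (simp add: perp eta_simps a_def e_def)
qed

lemma boost_beta_vel_maps: "boost eta s (beta_vel eta s s1 s2) s1 = s2"
proof -
  define u where "u = s2 - s1"
  have "(1 / boost_denominator) *\<^sub>R ((2 * (1 - gamma12) * - gamma1) *\<^sub>R x + (1 - gamma12) *\<^sub>R y
      + (2 * gamma1 * (1 - gamma12)) *\<^sub>R x - (2 * gamma2 * - gamma1) *\<^sub>R y) = y" for x y :: 'v
  proof -
    define F where "F = lincomb2 x y"
    note F = lincomb2_fold[OF F_def]
    show ?thesis
      unfolding F by (rule arg_cong[where f = F])
        (use boost_denominator_pos in \<open>simp add: boost_denominator_def field_simps\<close>)
  qed
  from this[of s u] show ?thesis
    unfolding boost_beta_vel tens_def u_def[symmetric]
    by (simp add: u_def eta_simps eta_states unit_s1)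
qed

lemma beta_vel_unique:
  assumes \<beta>: "eta \<beta> s = 0" and lt1: "eta \<beta> \<beta> < 1" and maps: "boost eta s \<beta> s1 = s2"
  shows "\<beta> = beta_vel eta s s1 s2"
proof -
  define g where "g = lorentz_factor eta \<beta>"
  define p where "p = eta \<beta> s1"
  define P where "P = gamma1 + gamma2"
  have "0 \<le> eta \<beta> \<beta>" by (rule eta_nonneg_orthogonal[OF unit_s \<beta>])
  then have g: "1 \<le> g" using lt1 by (simp add: g_def lorentz_factor_def)
  have B: "eta \<beta> \<beta> = (g\<^sup>2 - 1) / g\<^sup>2"
    using lorentz_factor_sq[of eta \<beta>, OF lt1] g by (simp add: g_def field_simps)
  have s21: "s2 - s1
      = ((g - 1) * gamma1 + g * p) *\<^sub>R s + (g\<^sup>2 / (g + 1) * p + g * gamma1) *\<^sub>R \<beta>"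
    using boost_eq[OF unit_s \<beta> lt1, of s1, folded g_def p_def] maps
    by (simp add: eta_states algebra_simps)
  have gamma2: "gamma2 = g * (gamma1 + p)"
  proof -
    have "- gamma2 = eta s (s2 - s1) - gamma1" by (simp add: eta_simps eta_states)
    also have "\<dots> = - g * (gamma1 + p)"
      unfolding s21 by (simp add: eta_simps unit_s eta_sym[of s \<beta>] \<beta> algebra_simps)
    finally show ?thesis by simp
  qed
  define c where "c = g * P / (g + 1)"
  have "s21_perp = c *\<^sub>R \<beta>"
  proof -
    have "((g - 1) * gamma1 + g * p) *\<^sub>R x + (g\<^sup>2 / (g + 1) * p + g * gamma1) *\<^sub>R y
        - (gamma2 - gamma1) *\<^sub>R x = c *\<^sub>R y" for x y :: 'v
    proof -
      define F where "F = lincomb2 x y"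
      note F = lincomb2_fold[OF F_def]
      show ?thesis
        unfolding F by (rule arg_cong[where f = F])
          (use g in \<open>simp add: gamma2 c_def P_def field_simps power2_eq_square\<close>)
    qed
    then show ?thesis unfolding s21_perp_def diff_diff_eq2[symmetric] s21 .
  qed
  then have "eta s21_perp s21_perp = c\<^sup>2 * eta \<beta> \<beta>"
    by (simp add: eta_simps power2_eq_square)
  also have "\<dots> = P\<^sup>2 * (g - 1) / (g + 1)"
  proof -
    have "g \<noteq> 0" "g + 1 \<noteq> 0" using g by simp_all
    then show ?thesis unfolding c_def B by (simp add: divide_simps) algebra
  qed
  finally have "beta_denominator = P\<^sup>2 * g / (g + 1)"
    using denominators_eq(1) g unfolding P_def by (simp add: field_simps) algebra
  moreover have "0 < P" using gamma_ge_1 by (simp add: P_def)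
  ultimately have kc: "P / beta_denominator * c = 1"
    using g by (simp add: c_def field_simps power2_eq_square)
  show ?thesis
    unfolding beta_vel_eq \<open>s21_perp = c *\<^sub>R \<beta>\<close> P_def[symmetric] scaleR_scaleR kc by simp
qed

lemma boost_between_states:
  "(\<exists>!\<beta>. eta \<beta> s = 0 \<and> eta \<beta> \<beta> < 1 \<and> boost eta s \<beta> s1 = s2)
   \<and> (let \<beta> = beta_vel eta s s1 s2 in eta \<beta> s = 0 \<and> eta \<beta> \<beta> < 1 \<and> boost eta s \<beta> s1 = s2)
   \<and> (let g1 = - eta s s1; g2 = - eta s s2; g12 = - eta s1 s2; s21 = s2 - s1 in
        boost eta s (beta_vel eta s s1 s2) =
          (\<lambda>w. w + (1 / (1 + 2 * g1 * g2 - g12)) *\<^sub>R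
             ((2 * (1 - g12)) *\<^sub>R tens eta s s w + tens eta s21 s21 w
              + (2 * g1) *\<^sub>R tens eta s s21 w - (2 * g2) *\<^sub>R tens eta s21 s w)))"
proof -
  have exists: "eta (beta_vel eta s s1 s2) s = 0
      \<and> eta (beta_vel eta s s1 s2) (beta_vel eta s s1 s2) < 1
      \<and> boost eta s (beta_vel eta s s1 s2) s1 = s2"
    using eta_beta_vel_s eta_beta_vel_less_1 boost_beta_vel_maps by blast
  moreover have "\<exists>!\<beta>. eta \<beta> s = 0 \<and> eta \<beta> \<beta> < 1 \<and> boost eta s \<beta> s1 = s2"
    using exists beta_vel_unique by blast
  moreover note boost_beta_vel[unfolded boost_denominator_def gamma1_def gamma2_def gamma12_def]
  ultimately show ?thesis unfolding Let_def by blast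
qed

end

theorem mainTheorem3:
  fixes eta :: "'v::euclidean_space \<Rightarrow> 'v \<Rightarrow> real" and S :: "'v set"
  assumes "minkowski_form eta"
    and "S \<in> components {v. eta v v = -1}"
  shows "(\<forall>s\<in>S. \<forall>s1\<in>S. \<forall>s2\<in>S.
            (\<exists>!\<beta>. eta \<beta> s = 0 \<and> eta \<beta> \<beta> < 1 \<and> boost eta s \<beta> s1 = s2)
          \<and> (let \<beta> = beta_vel eta s s1 s2 in
               eta \<beta> s = 0 \<and> eta \<beta> \<beta> < 1 \<and> boost eta s \<beta> s1 = s2)
          \<and> (let g1 = - eta s s1; g2 = - eta s s2; g12 = - eta s1 s2; s21 = s2 - s1 in
               boost eta s (beta_vel eta s s1 s2) =
                 (\<lambda>w. w + (1 / (1 + 2 * g1 * g2 - g12)) *\<^sub>R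
                    ((2 * (1 - g12)) *\<^sub>R tens eta s s w + tens eta s21 s21 w
                     + (2 * g1) *\<^sub>R tens eta s s21 w - (2 * g2) *\<^sub>R tens eta s21 s w))))
       \<and> (\<forall>L. linear L \<and> (\<forall>x y. eta (L x) (L y) = eta x y) \<and> L ` S = S \<longrightarrow>
            (\<forall>s\<in>S. \<forall>s1\<in>S. \<forall>s2\<in>S.
               beta_vel eta (L s) (L s1) (L s2) = L (beta_vel eta s s1 s2)))"
proof -
  interpret minkowski eta by (rule minkowski_form_imp_minkowski[OF assms(1)])
  have conn: "connected S" and hyp: "S \<subseteq> {v. eta v v = -1}"
    using assms(2) by (simp_all add: in_components_connected in_components_subset)
  have triple: "state_triple eta s s1 s2" if "s \<in> S" "s1 \<in> S" "s2 \<in> S" for s s1 s2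
    by unfold_locales (use that hyp connected_hyperboloid_eta_le[OF conn hyp] in auto)
  show ?thesis
  proof (rule conjI)
    show "\<forall>L. linear L \<and> (\<forall>x y. eta (L x) (L y) = eta x y) \<and> L ` S = S \<longrightarrow>
        (\<forall>s\<in>S. \<forall>s1\<in>S. \<forall>s2\<in>S. beta_vel eta (L s) (L s1) (L s2) = L (beta_vel eta s s1 s2))"
      using beta_vel_linear_isometry by blast
  qed (use state_triple.boost_between_states[OF triple] in blast)
qed

end
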